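(* Let $T$ be a real inner product space of dimension $n > 4$ and let $\mathcal{R}$ be the space of algebraic curvature tensors on $T$. Then the image of the quadratic map $\rho: S^3 T^* \to \Lambda^2 T^* \otimes \Lambda^2 T^*$, $\rho(A)_{ijkl} = -g^{ab} A_{ika}A_{jlb} + g^{ab} A_{ila}A_{jkb}$, is not all of $\mathcal{R}$. Consequently the requirement that the Riemann curvature tensor at each point lies in the image of $\rho$, which is necessary for a metric $g$ of dimension $n>4$ to be a Hessian metric, is a non-trivial condition.
   Context: A Riemannian metric $g$ is Hessian if around each point there are local coordinates $x$ and a function $\phi$ with $g_{ij} = \partial^2 \phi/\partial x_i\partial x_j$. It is known that if $g$ is Hessian, with dually flat connection $\overline{\nabla} = \nabla + A$ ($\nabla$ the Levi-Civita connection), then $A$ (with indices lowered by $g$) lies in $S^3T^*$ and the Riemann curvature satisfies $R_{ijkl} = -g^{ab}A_{ika}A_{jlb} + g^{ab}A_{ila}A_{jkb}$, i.e. $R = \rho(A)$ at each point. An algebraic curvature tensor is an element of $\Lambda^2T^*\otimes\Lambda^2T^*$ that is symmetric under exchange of the two pairs and satisfies the first Bianchi identity; $\dim\mathcal{R} = n^2(n^2-1)/12$. *)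

theory Defs
  imports "HOL-Analysis.Analysis"
begin

text \<open>Tensors on an n-dimensional real vector space T, written in components with
respect to a basis indexed by the finite type 'n (so n = CARD('n)).
The inner product is given by its Gram matrix g (symmetric, positive definite);
its inverse matrix supplies g^{ab}.\<close>

type_synonym 'n tensor3 = "'n \<Rightarrow> 'n \<Rightarrow> 'n \<Rightarrow> real"
type_synonym 'n tensor4 = "'n \<Rightarrow> 'n \<Rightarrow> 'n \<Rightarrow> 'n \<Rightarrow> real"

definition inner_product_matrix :: "real^'n^'n \<Rightarrow> bool" where
  "inner_product_matrix g \<longleftrightarrow> transpose g = g \<and> (\<forall>x. x \<noteq> 0 \<longrightarrow> x \<bullet> (g *v x) > 0)"

definition sym3 :: "'n tensor3 \<Rightarrow> bool" where
  "sym3 A \<longleftrightarrow> (\<forall>i j k. A i j k = A j i k \<and> A i j k = A i k j)"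

definition alg_curv :: "'n tensor4 \<Rightarrow> bool" where
  "alg_curv R \<longleftrightarrow>
     (\<forall>i j k l. R i j k l = - R j i k l) \<and>
     (\<forall>i j k l. R i j k l = - R i j l k) \<and>
     (\<forall>i j k l. R i j k l = R k l i j) \<and>
     (\<forall>i j k l. R i j k l + R j k i l + R k i j l = 0)"

definition rho :: "real^'n^'n \<Rightarrow> 'n tensor3 \<Rightarrow> 'n tensor4" where
  "rho g A = (\<lambda>i j k l.
      (\<Sum>a\<in>UNIV. \<Sum>b\<in>UNIV. matrix_inv g $ a $ b * (- A i k a * A j l b + A i l a * A j k b)))"

end

(*
  S^3 T^* has dimension C(n+2,3), while the algebraic curvature tensors contain
  the 3 C(n,3) + C(n,2) linearly independent tensors (e^a \<wedge> e^b) \<odot> (e^a \<wedge> e^c), a \<notin> {b,c},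
  which is more as soon as n > 4. The map rho is quadratic, hence differentiable, and a
  differentiable image of a lower-dimensional space is Lebesgue-null, so it cannot cover a
  higher-dimensional subspace.
*)
theory Submission
  imports Defs
begin

lemma subspace_not_subset_differentiable_image:
  fixes f :: "'a::euclidean_space \<Rightarrow> 'b::euclidean_space"
  assumes S: "subspace S" and T: "subspace T" and dim_less: "dim S < dim T"
    and diff: "f differentiable_on S"
  shows "\<not> T \<subseteq> f ` S"
proof
  assume T_sub: "T \<subseteq> f ` S"
  \<comment> \<open>Adding the orthogonal complement C of T makes the whole space the differentiable image
    of S \<times> C, which is still too small.\<close>
  define C where "C = orthogonal_comp T"
  have C: "subspace C" by (simp add: C_def subspace_orthogonal_comp)
  have "dim C + dim T = DIM('b)"
    using dim_subspace_orthogonal_to_vectors[OF T subspace_UNIV]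
    by (simp add: C_def orthogonal_comp_def)
  then have dim_SC: "dim (S \<times> C) < DIM('b)"
    using dim_Times[OF S C] dim_less by simp
  obtain E :: "'b set" where E: "subspace E" "dim E = dim (S \<times> C)"
    using choose_subspace_of_subspace[of "dim (S \<times> C)" "UNIV :: 'b set"] dim_SC by auto
  obtain \<phi> :: "'b \<Rightarrow> 'a \<times> 'b" where \<phi>: "linear \<phi>" "\<phi> ` E = S \<times> C"
    using isometries_subspaces[OF E(1) subspace_Times[OF S C] E(2)] by metis
  define G where "G z = f (fst (\<phi> z)) + snd (\<phi> z)" for z
  have "(\<lambda>z. fst (\<phi> z)) ` E = S"
  proof -
    have "C \<noteq> {}" using subspace_0[OF C] by auto
    then show ?thesis using \<phi>(2) by (simp add: image_image[symmetric] fst_image_times)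
  qed
  moreover have "linear (\<lambda>z. fst (\<phi> z))"
    using linear_compose[OF \<phi>(1) linear_fst] by (simp add: o_def)
  ultimately have "(\<lambda>z. f (fst (\<phi> z))) differentiable_on E"
    using differentiable_on_compose linear_imp_differentiable_on diff by metis
  moreover have "(\<lambda>z. snd (\<phi> z)) differentiable_on E"
    using linear_compose[OF \<phi>(1) linear_snd] by (simp add: o_def linear_imp_differentiable_on)
  ultimately have "G differentiable_on E"
    unfolding G_def by (rule differentiable_on_add)
  moreover have "negligible E"
    using dim_SC unfolding E(2)[symmetric] by (rule negligible_lowdim)
  ultimately have "negligible (G ` E)"
    by (rule negligible_differentiable_image_negligible[OF order_refl, rotated])
  moreover have "UNIV \<subseteq> G ` E"
  proof
    fix y :: 'b
    obtain t c where "y = t + c" "t \<in> T" "c \<in> C"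
      using subspace_sum_orthogonal_comp[OF T] unfolding C_def set_plus_def by blast
    then obtain s where "s \<in> S" "y = f s + c" using T_sub by auto
    moreover obtain z where "z \<in> E" "\<phi> z = (s, c)" using \<phi>(2) \<open>s \<in> S\<close> \<open>c \<in> C\<close>
      by (metis SigmaI imageE)
    ultimately show "y \<in> G ` E" by (force simp: G_def)
  qed
  ultimately have "negligible (UNIV :: 'b set)"
    using negligible_subset by blast
  then show False by simp
qed

lemma differentiable_on_bilinear_diagonal:
  fixes B :: "'a::euclidean_space \<Rightarrow> 'a \<Rightarrow> 'b::euclidean_space"
  assumes "bilinear B"
  shows "(\<lambda>v. B v v) differentiable_on S"
proof -
  have bb: "bounded_bilinear B"
    using assms bilinear_conv_bounded_bilinear by blast
  have "((\<lambda>v. B v v) has_derivative (\<lambda>h. B x h + B h x)) (at x within S)" for x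
    using bounded_bilinear.FDERIV[OF bb has_derivative_ident has_derivative_ident] by simp
  then show ?thesis
    unfolding differentiable_on_def differentiable_def by blast
qed

lemma inj_on_independent_if_diagonal:
  fixes X :: "'i \<Rightarrow> real^'c" and p :: "'i \<Rightarrow> 'c"
  assumes fin: "finite I"
    and diag: "\<And>a b. a \<in> I \<Longrightarrow> b \<in> I \<Longrightarrow> X b $ p a = (if b = a then d a else 0)"
    and nz: "\<And>a. a \<in> I \<Longrightarrow> d a \<noteq> 0"
  shows "inj_on X I" and "independent (X ` I)"
proof -
  show inj: "inj_on X I"
  proof (rule inj_onI)
    fix a b assume "a \<in> I" "b \<in> I" "X a = X b"
    then show "a = b"
      using diag[of a a] diag[of a b] nz[of a] by (metis (full_types))
  qed
  show "independent (X ` I)"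
    unfolding independent_explicit
  proof (intro conjI allI impI ballI)
    show "finite (X ` I)" using fin by simp
    fix c v assume sum0: "(\<Sum>v\<in>X ` I. c v *\<^sub>R v) = 0" and "v \<in> X ` I"
    then obtain a where a: "a \<in> I" "v = X a" by auto
    have "0 = (\<Sum>b\<in>I. c (X b) *\<^sub>R X b) $ p a"
      using sum0 sum.reindex[OF inj, of "\<lambda>v. c v *\<^sub>R v"] by simp
    also have "\<dots> = (\<Sum>b\<in>I. if b = a then c (X b) * d a else 0)"
      unfolding sum_component by (intro sum.cong) (auto simp: diag a)
    also have "\<dots> = c (X a) * d a" using fin a by simp
    finally show "c v = 0" using nz[OF a(1)] a by simp
  qed
qed

definition incr_pairs :: "nat \<Rightarrow> (nat \<times> nat) set" where
  "incr_pairs m = {(x, y). x < y \<and> y < m}"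

definition incr_triples :: "nat \<Rightarrow> (nat \<times> nat \<times> nat) set" where
  "incr_triples m = {(x, y, z). x < y \<and> y < z \<and> z < m}"

lemma finite_incr_pairs: "finite (incr_pairs m)"
  by (rule finite_subset[of _ "{..<m} \<times> {..<m}"]) (auto simp: incr_pairs_def)

lemma finite_incr_triples: "finite (incr_triples m)"
  by (rule finite_subset[of _ "{..<m} \<times> {..<m} \<times> {..<m}"]) (auto simp: incr_triples_def)

lemma card_incr_pairs: "card (incr_pairs m) = m choose 2"
proof (induction m)
  case 0
  then show ?case by (simp add: incr_pairs_def)
next
  case (Suc m)
  have "incr_pairs (Suc m) = incr_pairs m \<union> (\<lambda>x. (x, m)) ` {..<m}"
    by (auto simp: incr_pairs_def less_Suc_eq)
  moreover have "incr_pairs m \<inter> (\<lambda>x. (x, m)) ` {..<m} = {}"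
    by (auto simp: incr_pairs_def)
  ultimately have "card (incr_pairs (Suc m)) = card (incr_pairs m) + m"
    by (simp add: card_Un_disjoint finite_incr_pairs card_image inj_on_def)
  then show ?case using Suc.IH by (simp add: numeral_2_eq_2)
qed

lemma card_incr_triples: "card (incr_triples m) = m choose 3"
proof (induction m)
  case 0
  have "incr_triples 0 = {}" by (auto simp: incr_triples_def)
  then show ?case by simp
next
  case (Suc m)
  have "incr_triples (Suc m) = incr_triples m \<union> (\<lambda>(x, y). (x, y, m)) ` incr_pairs m"
    by (auto simp: incr_triples_def incr_pairs_def less_Suc_eq)
  moreover have "incr_triples m \<inter> (\<lambda>(x, y). (x, y, m)) ` incr_pairs m = {}"
    by (auto simp: incr_triples_def incr_pairs_def)
  moreover have "inj_on (\<lambda>(x, y). (x, y, m)) (incr_pairs m)"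
    by (auto simp: inj_on_def)
  ultimately have "card (incr_triples (Suc m)) = card (incr_triples m) + card (incr_pairs m)"
    by (simp add: card_Un_disjoint finite_incr_pairs finite_incr_triples card_image)
  then show ?case using Suc.IH by (simp add: card_incr_pairs numeral_3_eq_3 numeral_2_eq_2)
qed

text \<open>The index (a, b, c) stands for the tensor (e^a \<wedge> e^b) \<odot> (e^a \<wedge> e^c) with a \<notin> {b, c};
  as (a, b, b) and (b, a, a) give the same tensor, only a < b is kept when b = c.\<close>

definition curv_index :: "nat \<Rightarrow> (nat \<times> nat \<times> nat) set" where
  "curv_index n = {(a, b, c). a < n \<and> b < n \<and> c < n \<and> a \<noteq> b \<and> a \<noteq> c \<and> b \<le> c \<and> (b = c \<longrightarrow> a < b)}"

lemma finite_curv_index: "finite (curv_index n)"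
  by (rule finite_subset[of _ "{..<n} \<times> {..<n} \<times> {..<n}"]) (auto simp: curv_index_def)

lemma curv_index_eq:
  "curv_index n = incr_triples n \<union> (\<lambda>(x, y, z). (y, x, z)) ` incr_triples n
     \<union> (\<lambda>(x, y, z). (z, x, y)) ` incr_triples n \<union> (\<lambda>(x, y). (x, y, y)) ` incr_pairs n"
    (is "_ = ?T \<union> ?f2 ` ?T \<union> ?f3 ` ?T \<union> ?f4 ` ?P")
proof (intro equalityI subsetI)
  fix t assume "t \<in> curv_index n"
  then obtain a b c where t: "t = (a, b, c)" "a < n" "b < n" "c < n" "a \<noteq> b" "a \<noteq> c" "b \<le> c"
      "b = c \<longrightarrow> a < b"
    by (auto simp: curv_index_def)
  consider "b = c" | "a < b" "b < c" | "b < a" "a < c" | "c < a" "b < c"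
    using t by linarith
  then show "t \<in> ?T \<union> ?f2 ` ?T \<union> ?f3 ` ?T \<union> ?f4 ` ?P"
  proof cases
    case 1
    then have "t = ?f4 (a, b)" "(a, b) \<in> ?P" using t by (auto simp: incr_pairs_def)
    then show ?thesis by blast
  next
    case 2
    then show ?thesis using t by (auto simp: incr_triples_def)
  next
    case 3
    then have "t = ?f2 (b, a, c)" "(b, a, c) \<in> ?T" using t by (auto simp: incr_triples_def)
    then show ?thesis by blast
  next
    case 4
    then have "t = ?f3 (b, c, a)" "(b, c, a) \<in> ?T" using t by (auto simp: incr_triples_def)
    then show ?thesis by blast
  qed
qed (auto simp: curv_index_def incr_triples_def incr_pairs_def)

lemma card_curv_index: "card (curv_index n) = 3 * (n choose 3) + (n choose 2)"
proof -
  let ?T = "incr_triples n" and ?P = "incr_pairs n"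
  let ?f2 = "\<lambda>(x::nat, y::nat, z::nat). (y, x, z)" and ?f3 = "\<lambda>(x::nat, y::nat, z::nat). (z, x, y)"
    and ?f4 = "\<lambda>(x::nat, y::nat). (x, y, y)"
  have "inj_on ?f2 ?T" "inj_on ?f3 ?T" "inj_on ?f4 ?P"
    by (auto simp: inj_on_def)
  moreover have "?T \<inter> ?f2 ` ?T = {}" "(?T \<union> ?f2 ` ?T) \<inter> ?f3 ` ?T = {}"
    "(?T \<union> ?f2 ` ?T \<union> ?f3 ` ?T) \<inter> ?f4 ` ?P = {}"
    by (auto simp: incr_triples_def incr_pairs_def)
  ultimately show ?thesis
    unfolding curv_index_eq
    by (simp add: card_Un_disjoint card_image finite_incr_triples finite_incr_pairs
        card_incr_triples card_incr_pairs)
qed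

lemma choose_3_less:
  fixes n :: nat
  assumes "4 < n"
  shows "(n + 2) choose 3 < 3 * (n choose 3) + (n choose 2)"
proof -
  define k where "k = n - 5"
  have n: "n = Suc (Suc (Suc (Suc (Suc k))))"
    using assms by (simp add: k_def)
  show ?thesis
    unfolding n by (simp add: numeral_eq_Suc)
qed

definition vec3 :: "('n::finite) tensor3 \<Rightarrow> real^('n \<times> 'n \<times> 'n)" where
  "vec3 A = (\<chi> x. case x of (i, j, k) \<Rightarrow> A i j k)"

definition unvec3 :: "real^(('n::finite) \<times> 'n \<times> 'n) \<Rightarrow> 'n tensor3" where
  "unvec3 v = (\<lambda>i j k. v $ (i, j, k))"

definition vec4 :: "('n::finite) tensor4 \<Rightarrow> real^('n \<times> 'n \<times> 'n \<times> 'n)" where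
  "vec4 R = (\<chi> x. case x of (i, j, k, l) \<Rightarrow> R i j k l)"

definition unvec4 :: "real^(('n::finite) \<times> 'n \<times> 'n \<times> 'n) \<Rightarrow> 'n tensor4" where
  "unvec4 v = (\<lambda>i j k l. v $ (i, j, k, l))"

lemma unvec3_vec3 [simp]: "unvec3 (vec3 A) = A"
  by (simp add: vec3_def unvec3_def)

lemma unvec4_vec4 [simp]: "unvec4 (vec4 R) = R"
  by (simp add: vec4_def unvec4_def)

lemma vec4_unvec4 [simp]: "vec4 (unvec4 v) = v"
  by (simp add: vec4_def unvec4_def vec_eq_iff split: prod.splits)

definition sym3_vectors :: "(real^(('n::finite) \<times> 'n \<times> 'n)) set" where
  "sym3_vectors = {v. sym3 (unvec3 v)}"

definition alg_curv_vectors :: "(real^(('n::finite) \<times> 'n \<times> 'n \<times> 'n)) set" where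
  "alg_curv_vectors = {v. alg_curv (unvec4 v)}"

lemma subspace_sym3_vectors: "subspace sym3_vectors"
  unfolding subspace_def sym3_vectors_def sym3_def unvec3_def by auto

lemma alg_curv_lincomb:
  assumes "alg_curv R" and "alg_curv S"
  shows "alg_curv (\<lambda>i j k l. a * R i j k l + b * S i j k l)"
proof -
  have R: "R i j k l = - R j i k l" "R i j k l = - R i j l k" "R i j k l = R k l i j"
    "R i j k l + R j k i l + R k i j l = 0" for i j k l
    using assms(1) unfolding alg_curv_def by blast+
  have S: "S i j k l = - S j i k l" "S i j k l = - S i j l k" "S i j k l = S k l i j"
    "S i j k l + S j k i l + S k i j l = 0" for i j k l
    using assms(2) unfolding alg_curv_def by blast+
  show ?thesis
    unfolding alg_curv_def
  proof (intro conjI allI)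
    fix i j k l
    show "a * R i j k l + b * S i j k l = - (a * R j i k l + b * S j i k l)"
      using R(1)[of i j k l] S(1)[of i j k l] by simp
    show "a * R i j k l + b * S i j k l = - (a * R i j l k + b * S i j l k)"
      using R(2)[of i j k l] S(2)[of i j k l] by simp
    show "a * R i j k l + b * S i j k l = a * R k l i j + b * S k l i j"
      using R(3)[of i j k l] S(3)[of i j k l] by simp
    show "a * R i j k l + b * S i j k l + (a * R j k i l + b * S j k i l)
        + (a * R k i j l + b * S k i j l) = 0"
      using R(4)[of i j k l] S(4)[of i j k l] by algebra
  qed
qed

lemma subspace_alg_curv_vectors:
  "subspace (alg_curv_vectors :: (real^('n::finite \<times> 'n \<times> 'n \<times> 'n)) set)"
  unfolding subspace_def alg_curv_vectors_def
proof (intro conjI ballI allI)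
  show "0 \<in> {v. alg_curv (unvec4 v)}"
    by (simp add: alg_curv_def unvec4_def)
next
  fix x y :: "real^('n \<times> 'n \<times> 'n \<times> 'n)"
  assume "x \<in> {v. alg_curv (unvec4 v)}" "y \<in> {v. alg_curv (unvec4 v)}"
  then show "x + y \<in> {v. alg_curv (unvec4 v)}"
    using alg_curv_lincomb[of "unvec4 x" "unvec4 y" 1 1] by (simp add: unvec4_def)
next
  fix c and x :: "real^('n \<times> 'n \<times> 'n \<times> 'n)"
  assume "x \<in> {v. alg_curv (unvec4 v)}"
  then show "c *\<^sub>R x \<in> {v. alg_curv (unvec4 v)}"
    using alg_curv_lincomb[of "unvec4 x" "unvec4 x" c 0] by (simp add: unvec4_def)
qed

lemma sym3_eq_if_mset_eq:
  assumes "sym3 A" and abc: "{#a, b, c#} = {#i, j, k#}"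
  shows "A a b c = A i j k"
proof -
  have swap: "A x y z = A y x z" "A x y z = A x z y" for x y z
    using assms(1) unfolding sym3_def by auto
  have pair: "(b = q \<and> c = r) \<or> (b = r \<and> c = q)" if "{#b, c#} = {#q, r#}" for q r
    using that by (metis add_eq_conv_ex add_mset_eq_single)
  have "a \<in># {#i, j, k#}"
    using abc by (metis union_single_eq_member)
  then consider "a = i" "{#b, c#} = {#j, k#}" | "a = j" "{#b, c#} = {#i, k#}"
    | "a = k" "{#b, c#} = {#i, j#}"
    using abc by (auto simp: add_mset_commute)
  then show ?thesis
    by cases (metis pair swap)+
qed

definition mset3 :: "'a \<times> 'a \<times> 'a \<Rightarrow> 'a multiset" where
  "mset3 x = (case x of (i, j, k) \<Rightarrow> {#i, j, k#})"

definition sym_basis :: "'n multiset \<Rightarrow> real^(('n::finite) \<times> 'n \<times> 'n)" where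
  "sym_basis M = (\<chi> x. if mset3 x = M then 1 else 0)"

lemma sym3_vectors_subset_span:
  "(sym3_vectors :: (real^(('n::finite) \<times> 'n \<times> 'n)) set) \<subseteq> span (sym_basis ` range mset3)"
proof
  fix v :: "real^('n \<times> 'n \<times> 'n)"
  assume v: "v \<in> sym3_vectors"
  define w where "w M = v $ (SOME x. mset3 x = M)" for M
  have "v = (\<Sum>M\<in>range mset3. w M *\<^sub>R sym_basis M)"
  proof (subst vec_eq_iff, intro allI)
    fix x
    have "(\<Sum>M\<in>range mset3. w M *\<^sub>R sym_basis M) $ x = (\<Sum>M\<in>range mset3. if mset3 x = M then w M else 0)"
      unfolding sum_component by (intro sum.cong) (auto simp: sym_basis_def)
    also have "\<dots> = w (mset3 x)"
      by simp
    also have "\<dots> = v $ x"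
    proof -
      let ?y = "SOME y. mset3 y = mset3 x"
      have y: "mset3 ?y = mset3 x"
        by (rule someI) (rule refl)
      obtain i j k where x: "x = (i, j, k)" by (cases x)
      obtain a b c where "?y = (a, b, c)" by (cases ?y)
      with x y have "{#a, b, c#} = {#i, j, k#}" "w (mset3 x) = v $ (a, b, c)"
        by (simp_all add: mset3_def w_def)
      with v x show ?thesis
        using sym3_eq_if_mset_eq[of "unvec3 v" a b c i j k]
        by (simp add: sym3_vectors_def unvec3_def)
    qed
    finally show "v $ x = (\<Sum>M\<in>range mset3. w M *\<^sub>R sym_basis M) $ x" ..
  qed
  also have "\<dots> \<in> span (sym_basis ` range mset3)"
    by (intro span_sum span_scale span_base imageI)
  finally show "v \<in> span (sym_basis ` range mset3)" .
qed

lemma dim_sym3_vectors_le: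
  "dim (sym3_vectors :: (real^(('n::finite) \<times> 'n \<times> 'n)) set) \<le> (CARD('n) + 2) choose 3"
proof -
  have "dim (sym3_vectors :: (real^('n \<times> 'n \<times> 'n)) set)
      \<le> card (sym_basis ` range (mset3 :: 'n \<times> 'n \<times> 'n \<Rightarrow> 'n multiset))"
    by (rule dim_le_card[OF sym3_vectors_subset_span]) simp
  also have "\<dots> \<le> card (range (mset3 :: 'n \<times> 'n \<times> 'n \<Rightarrow> 'n multiset))"
    by (rule card_image_le) simp
  also have "\<dots> \<le> card (multisets_of_size (UNIV :: 'n set) 3)"
    by (rule card_mono[OF finite_multisets_of_size]) (auto simp: multisets_of_size_def mset3_def)
  also have "\<dots> = (CARD('n) + 2) choose 3"
    by (simp add: card_multisets_of_size)
  finally show ?thesis .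
qed

definition dual_basis :: "'n \<Rightarrow> 'n \<Rightarrow> real" where
  "dual_basis p i = (if i = p then 1 else 0)"

definition wedge :: "('n \<Rightarrow> real) \<Rightarrow> ('n \<Rightarrow> real) \<Rightarrow> 'n \<Rightarrow> 'n \<Rightarrow> real" where
  "wedge \<alpha> \<beta> i j = \<alpha> i * \<beta> j - \<beta> i * \<alpha> j"

definition wedge_symprod :: "('n \<Rightarrow> real) \<Rightarrow> ('n \<Rightarrow> real) \<Rightarrow> ('n \<Rightarrow> real) \<Rightarrow> 'n tensor4" where
  "wedge_symprod \<alpha> \<beta> \<gamma> =
     (\<lambda>i j k l. wedge \<alpha> \<beta> i j * wedge \<alpha> \<gamma> k l + wedge \<alpha> \<gamma> i j * wedge \<alpha> \<beta> k l)"

lemma alg_curv_wedge_symprod: "alg_curv (wedge_symprod \<alpha> \<beta> \<gamma>)"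
  unfolding alg_curv_def wedge_symprod_def wedge_def
  by (intro conjI allI; simp add: algebra_simps)

definition curv_family :: "(nat \<Rightarrow> 'n) \<Rightarrow> nat \<times> nat \<times> nat \<Rightarrow> real^(('n::finite) \<times> 'n \<times> 'n \<times> 'n)" where
  "curv_family u t = (case t of (a, b, c) \<Rightarrow>
     vec4 (wedge_symprod (dual_basis (u a)) (dual_basis (u b)) (dual_basis (u c))))"

definition curv_test :: "(nat \<Rightarrow> 'n) \<Rightarrow> nat \<times> nat \<times> nat \<Rightarrow> 'n \<times> 'n \<times> 'n \<times> 'n" where
  "curv_test u t = (case t of (a, b, c) \<Rightarrow> (u a, u b, u a, u c))"

lemma curv_family_diagonal:
  assumes u: "inj_on u {..<n}" and s: "s \<in> curv_index n" and t: "t \<in> curv_index n"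
  shows "curv_family u t $ curv_test u s
    = (if t = s then (case s of (a, b, c) \<Rightarrow> if b = c then 2 else 1) else 0)"
proof -
  obtain a b c a' b' c' where st: "s = (a, b, c)" "t = (a', b', c')"
    by (cases s, cases t)
  have bd: "a < n" "b < n" "c < n" "a' < n" "b' < n" "c' < n"
    and cs: "a \<noteq> b" "a \<noteq> c" "b \<le> c" "b = c \<longrightarrow> a < b"
      "a' \<noteq> b'" "a' \<noteq> c'" "b' \<le> c'" "b' = c' \<longrightarrow> a' < b'"
    using s t st by (auto simp: curv_index_def)
  have dual_u: "dual_basis (u x) (u y) = (if x = y then 1 else 0)" if "x < n" "y < n" for x y
    using u that by (auto simp: dual_basis_def dest: inj_onD)
  have val: "curv_family u t $ curv_test u s =
    ((if a' = a then 1 else 0) * (if b' = b then 1 else 0) - (if b' = a then 1 else 0) * (if a' = b then 1 else 0)) *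
    ((if a' = a then 1 else 0) * (if c' = c then 1 else 0) - (if c' = a then 1 else 0) * (if a' = c then 1 else 0)) +
    ((if a' = a then 1 else 0) * (if c' = b then 1 else 0) - (if c' = a then 1 else 0) * (if a' = b then 1 else 0)) *
    ((if a' = a then 1 else 0) * (if b' = c then 1 else 0) - (if b' = a then 1 else 0) * (if a' = c then 1 else 0))"
    unfolding st curv_family_def curv_test_def vec4_def wedge_symprod_def wedge_def
    by (simp only: vec_lambda_beta prod.case dual_u bd)
  show ?thesis
  proof (cases "a' = a")
    case True
    then show ?thesis using val cs st by auto
  next
    case False
    then show ?thesis using val cs st by auto
  qed
qed

lemma card_curv_index_le_dim:
  "card (curv_index CARD('n)) \<le> dim (alg_curv_vectors :: (real^(('n::finite) \<times> 'n \<times> 'n \<times> 'n)) set)"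
proof -
  let ?I = "curv_index CARD('n)"
  obtain u :: "nat \<Rightarrow> 'n" where "bij_betw u {0..<CARD('n)} UNIV"
    using ex_bij_betw_nat_finite[of "UNIV :: 'n set"] by auto
  then have u: "inj_on u {..<CARD('n)}"
    by (simp add: bij_betw_def atLeast0LessThan)
  have X: "inj_on (curv_family u) ?I" "independent (curv_family u ` ?I)"
    by (rule inj_on_independent_if_diagonal[OF finite_curv_index curv_family_diagonal[OF u]];
        auto split: prod.splits)+
  have "curv_family u ` ?I \<subseteq> alg_curv_vectors"
    by (auto simp: curv_family_def alg_curv_vectors_def alg_curv_wedge_symprod)
  from independent_card_le_dim[OF this X(2)] show ?thesis
    by (simp add: card_image[OF X(1)])
qed

definition rho_polar :: "real^'n^'n \<Rightarrow> real^(('n::finite) \<times> 'n \<times> 'n) \<Rightarrow> real^('n \<times> 'n \<times> 'n)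
    \<Rightarrow> real^('n \<times> 'n \<times> 'n \<times> 'n)" where
  "rho_polar M v w = (\<chi> x. case x of (i, j, k, l) \<Rightarrow>
     \<Sum>a\<in>UNIV. \<Sum>b\<in>UNIV. M $ a $ b * (- v $ (i, k, a) * w $ (j, l, b) + v $ (i, l, a) * w $ (j, k, b)))"

lemma vec4_rho_unvec3: "vec4 (rho g (unvec3 v)) = rho_polar (matrix_inv g) v v"
  by (simp add: vec4_def rho_def unvec3_def rho_polar_def)

lemma bilinear_rho_polar: "bilinear (rho_polar M)"
  unfolding bilinear_def
proof (intro conjI allI)
  fix v w
  show "linear (rho_polar M v)" "linear (\<lambda>v. rho_polar M v w)"
    by (rule linearI;
        simp add: rho_polar_def vec_eq_iff algebra_simps sum.distrib[symmetric] sum_distrib_left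
          split: prod.splits)+
qed

theorem mainTheorem2:
  fixes g :: "real^'n^'n"
  assumes "inner_product_matrix g"
    and "CARD('n) > 4"
  shows "\<exists>R :: 'n tensor4. alg_curv R \<and> \<not> (\<exists>A. sym3 A \<and> rho g A = R)"
proof -
  let ?Q = "\<lambda>v. vec4 (rho g (unvec3 v))"
  have "dim (sym3_vectors :: (real^('n \<times> 'n \<times> 'n)) set)
      < dim (alg_curv_vectors :: (real^('n \<times> 'n \<times> 'n \<times> 'n)) set)"
    using dim_sym3_vectors_le choose_3_less[OF assms(2)] card_curv_index_le_dim
    unfolding card_curv_index by (rule le_less_trans[OF _ less_le_trans])
  moreover have "?Q differentiable_on sym3_vectors"
    unfolding vec4_rho_unvec3 by (rule differentiable_on_bilinear_diagonal[OF bilinear_rho_polar])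
  ultimately have "\<not> alg_curv_vectors \<subseteq> ?Q ` sym3_vectors"
    by (intro subspace_not_subset_differentiable_image subspace_sym3_vectors subspace_alg_curv_vectors)
  then obtain v where v: "alg_curv (unvec4 v)" "v \<notin> ?Q ` sym3_vectors"
    by (auto simp: alg_curv_vectors_def)
  have "rho g A \<noteq> unvec4 v" if "sym3 A" for A
  proof
    assume "rho g A = unvec4 v"
    then have "v = ?Q (vec3 A)" by simp
    moreover have "vec3 A \<in> sym3_vectors" using that by (simp add: sym3_vectors_def)
    ultimately show False using v(2) by blast
  qed
  then show ?thesis using v(1) by blast
qed

end
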